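(* Let $k,\lambda,\varepsilon>0$. For each $n\ge2$ let weights $\alpha_{1,n},\dots,\alpha_{n,n}>0$ with $\sum_{i=1}^n\alpha_{i,n}=1$ be given, and let $\alpha_{\min,n}$, $\alpha_{\max,n}$ be the smallest and largest of them. Let $P_n$ be the probability on $[0,\infty)^n$ with density $\lambda^n e^{-\lambda\|x\|_1}$ (i.e. the $x_i$ are independent exponential with parameter $\lambda$), where $\|x\|_1=\sum_i x_i$. Then there exists $N=N(k,\varepsilon)$ such that for every $n\ge N$, $$P_n\left\{\big[1-(1+\varepsilon)e^{-\gamma}\big]\alpha_{\min,n}\|x\|_1<\sum_{i=1}^n\alpha_{i,n}x_i-\prod_{i=1}^n x_i^{\alpha_{i,n}}<\big[1-(1-\varepsilon)e^{-\gamma}\big]\alpha_{\max,n}\|x\|_1\right\}\ge1-\frac1{n^k}.$$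
   Context: $\gamma$ denotes Euler's constant. *)

theory Defs
  imports "HOL-Probability.Probability"
begin

definition exp_prod_measure :: "real \<Rightarrow> nat \<Rightarrow> (nat \<Rightarrow> real) measure" where
  "exp_prod_measure l n = PiM {1..n} (\<lambda>_. density lborel (exponential_density l))"

end

theory Submission
  imports Defs "HOL-Real_Asymp.Real_Asymp"
begin

(*
  Write A = (1/n) sum x_i and G = exp((1/n) sum ln x_i) for the unweighted arithmetic and
  geometric means of a sample x with positive coordinates.

  The weighted gap  sum a_i x_i - prod x_i^a_i  is concave in the
      weight vector and nonnegative (AM-GM).  Splitting the weights a against the uniform
      weights gives  n a_min (A - G) <= weighted gap <= n a_max (A - G), so the theorem follows
      once  (1 - eps) e^-gamma A < G < (1 + eps) e^-gamma A.

  For x_i i.i.d. exponential(l), E[ln x_i] = -gamma - ln l and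
      E[x_i] = 1/l.  Chernoff bounds, with the moments E[x^s] = Gamma(s+1)/l^s and
      E[exp(a x)] = l/(l-a), show that each of the four events
      "sum ln x_i or l * sum x_i leaves its n*delta window" has probability at most q^n
      for some q < 1 depending only on delta.  Outside these events G/A lies within a factor
      exp(2 delta) = 1 + eps of e^-gamma.

  (3) Since n^k q^n -> 0, the four exceptional probabilities sum to at most n^-k for large n.
*)

definition amgm_gap :: "'a set \<Rightarrow> ('a \<Rightarrow> real) \<Rightarrow> ('a \<Rightarrow> real) \<Rightarrow> real" where
  "amgm_gap I w x = (\<Sum>i\<in>I. w i * x i) - exp (\<Sum>i\<in>I. w i * ln (x i))"

text \<open>Weighted AM-GM inequality: the gap is nonnegative for probability weights, by convexity of \<open>exp\<close>.\<close>
lemma amgm_gap_nonneg: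
  assumes "finite I" "I \<noteq> {}" "\<And>i. i \<in> I \<Longrightarrow> x i > 0"
    and "\<And>i. i \<in> I \<Longrightarrow> w i \<ge> 0" "(\<Sum>i\<in>I. w i) = 1"
  shows "amgm_gap I w x \<ge> 0"
proof -
  have "exp (\<Sum>i\<in>I. w i *\<^sub>R ln (x i)) \<le> (\<Sum>i\<in>I. w i * exp (ln (x i)))"
    by (rule convex_on_sum[OF assms(1,2) exp_convex assms(5)]) (use assms(4) in auto)
  also have "\<dots> = (\<Sum>i\<in>I. w i * x i)"
    using assms(3) by (intro sum.cong) auto
  finally show ?thesis by (simp add: amgm_gap_def)
qed

text \<open>The gap is concave in the weight vector, again by convexity of \<open>exp\<close>.\<close>
lemma amgm_gap_concave:
  assumes "\<And>i. i \<in> I \<Longrightarrow> w i = t * u i + (1 - t) * v i" "0 \<le> t" "t \<le> 1"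
  shows "t * amgm_gap I u x + (1 - t) * amgm_gap I v x \<le> amgm_gap I w x"
proof -
  have lin: "(\<Sum>i\<in>I. w i * f i) = t * (\<Sum>i\<in>I. u i * f i) + (1 - t) * (\<Sum>i\<in>I. v i * f i)"
    for f :: "'a \<Rightarrow> real"
  proof -
    have "(\<Sum>i\<in>I. w i * f i) = (\<Sum>i\<in>I. t * (u i * f i) + (1 - t) * (v i * f i))"
      by (intro sum.cong refl, subst assms(1)) (simp_all add: algebra_simps)
    then show ?thesis by (simp add: sum.distrib sum_distrib_left)
  qed
  have "exp (t * (\<Sum>i\<in>I. u i * ln (x i)) + (1 - t) * (\<Sum>i\<in>I. v i * ln (x i)))
     \<le> t * exp (\<Sum>i\<in>I. u i * ln (x i)) + (1 - t) * exp (\<Sum>i\<in>I. v i * ln (x i))"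
    using convex_onD[OF exp_convex, of "1 - t"] assms(2,3) by simp
  then show ?thesis
    unfolding amgm_gap_def lin[of x] lin[of "\<lambda>i. ln (x i)"] by (simp add: algebra_simps)
qed

text \<open>If the weights \<open>w\<close> contain \<open>t\<close> times the probability weights \<open>u\<close> plus a nonnegative
  remainder, then the \<open>w\<close>-gap dominates \<open>t\<close> times the \<open>u\<close>-gap (concavity plus AM-GM for the remainder).\<close>
lemma amgm_gap_split_weights:
  assumes fin: "finite I" and ne: "I \<noteq> {}" and xpos: "\<And>i. i \<in> I \<Longrightarrow> x i > 0"
    and wsum: "(\<Sum>i\<in>I. w i) = 1" and usum: "(\<Sum>i\<in>I. u i) = 1"
    and t: "0 \<le> t" and b: "\<And>i. i \<in> I \<Longrightarrow> b i \<ge> 0"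
    and split: "\<And>i. i \<in> I \<Longrightarrow> w i = t * u i + b i"
  shows "t * amgm_gap I u x \<le> amgm_gap I w x"
proof -
  have bsum: "(\<Sum>i\<in>I. b i) = 1 - t"
    using split wsum usum by (simp add: sum.distrib sum_distrib_left[symmetric] cong: sum.cong)
  show ?thesis
  proof (cases "t = 1")
    case True
    then have "\<forall>i\<in>I. b i = 0"
      using bsum b fin sum_nonneg_eq_0_iff[of I b] by simp
    then have "amgm_gap I w x = amgm_gap I u x"
      unfolding amgm_gap_def using split True by (simp cong: sum.cong)
    then show ?thesis using True by simp
  next
    case False
    have t1: "t < 1" using False bsum sum_nonneg[of I b] b by force
    define v where "v i = b i / (1 - t)" for i
    have "amgm_gap I v x \<ge> 0"
      using t1 bsum b by (intro amgm_gap_nonneg[OF fin ne xpos])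
        (auto simp: v_def sum_divide_distrib[symmetric])
    moreover have "t * amgm_gap I u x + (1 - t) * amgm_gap I v x \<le> amgm_gap I w x"
      using t t1 split by (intro amgm_gap_concave) (auto simp: v_def)
    ultimately show ?thesis using t1 by (smt (verit) mult_nonneg_nonneg)
  qed
qed

lemma amgm_gap_weight_comparison:
  fixes I :: "'a set" and \<alpha> x :: "'a \<Rightarrow> real"
  defines "u \<equiv> \<lambda>_. 1 / real (card I)"
  assumes fin: "finite I" and ne: "I \<noteq> {}" and xpos: "\<And>i. i \<in> I \<Longrightarrow> x i > 0"
    and apos: "\<And>i. i \<in> I \<Longrightarrow> \<alpha> i \<ge> 0" and asum: "(\<Sum>i\<in>I. \<alpha> i) = 1"
  shows "card I * Min (\<alpha> ` I) * amgm_gap I u x \<le> amgm_gap I \<alpha> x"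
    and "amgm_gap I \<alpha> x \<le> card I * Max (\<alpha> ` I) * amgm_gap I u x"
proof -
  define n where "n = real (card I)"
  define m where "m = Min (\<alpha> ` I)"
  define M where "M = Max (\<alpha> ` I)"
  have npos: "n > 0" using fin ne by (simp add: n_def card_gt_0_iff)
  have usum: "(\<Sum>i\<in>I. u i) = 1" using npos by (simp add: u_def n_def)
  have mle: "m \<le> \<alpha> i" and Mge: "\<alpha> i \<le> M" if "i \<in> I" for i
    using that fin by (simp_all add: m_def M_def)
  have m0: "m \<ge> 0" using fin ne apos by (auto simp: m_def)
  have "1 \<le> n * M"
    using sum_bounded_above[of I \<alpha> M] Mge asum by (simp add: n_def)
  then have nM: "n * M > 0" by simp
  show "card I * m * amgm_gap I u x \<le> amgm_gap I \<alpha> x"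
    using amgm_gap_split_weights[OF fin ne xpos asum usum, where t="n * m" and b="\<lambda>i. \<alpha> i - m"]
      npos m0 mle by (simp add: u_def n_def)
  have "(1 / (n * M)) * amgm_gap I \<alpha> x \<le> amgm_gap I u x"
  proof (rule amgm_gap_split_weights[OF fin ne xpos usum asum])
    show "u i = 1 / (n * M) * \<alpha> i + (M - \<alpha> i) / (n * M)" for i
    proof -
      have "1 / (n * M) * \<alpha> i + (M - \<alpha> i) / (n * M) = M / (n * M)"
        by (simp add: diff_divide_distrib)
      then show ?thesis using nM by (auto simp: u_def n_def)
    qed
  qed (use nM Mge in auto)
  then show "amgm_gap I \<alpha> x \<le> card I * M * amgm_gap I u x"
    using nM by (simp add: n_def field_simps)
qed

definition amgm_window :: "real \<Rightarrow> (nat \<Rightarrow> real) \<Rightarrow> nat \<Rightarrow> (nat \<Rightarrow> real) \<Rightarrow> bool" where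
  "amgm_window \<epsilon> \<alpha> n x \<longleftrightarrow>
     (1 - (1 + \<epsilon>) * exp (- euler_mascheroni)) * Min (\<alpha> ` {1..n}) * (\<Sum>i=1..n. \<bar>x i\<bar>)
       < (\<Sum>i=1..n. \<alpha> i * x i) - (\<Prod>i=1..n. x i powr \<alpha> i)
   \<and> (\<Sum>i=1..n. \<alpha> i * x i) - (\<Prod>i=1..n. x i powr \<alpha> i)
       < (1 - (1 - \<epsilon>) * exp (- euler_mascheroni)) * Max (\<alpha> ` {1..n}) * (\<Sum>i=1..n. \<bar>x i\<bar>)"

lemma amgm_window_of_mean_ratio:
  fixes x \<alpha> :: "nat \<Rightarrow> real" and n :: nat and \<epsilon> :: real
  defines "A \<equiv> (\<Sum>i=1..n. x i) / n" and "G \<equiv> exp ((\<Sum>i=1..n. ln (x i)) / n)"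
  assumes n: "n \<ge> 1" and xpos: "\<And>i. i \<in> {1..n} \<Longrightarrow> x i > 0"
    and apos: "\<And>i. i \<in> {1..n} \<Longrightarrow> \<alpha> i > 0" and asum: "(\<Sum>i=1..n. \<alpha> i) = 1"
    and lower: "(1 - \<epsilon>) * exp (- euler_mascheroni) * A < G"
    and upper: "G < (1 + \<epsilon>) * exp (- euler_mascheroni) * A"
  shows "amgm_window \<epsilon> \<alpha> n x"
proof -
  define c :: real where "c = exp (- euler_mascheroni)"
  define S where "S = (\<Sum>i=1..n. x i)"
  define m where "m = Min (\<alpha> ` {1..n})"
  define M where "M = Max (\<alpha> ` {1..n})"
  have ne: "{1..n} \<noteq> {}" using n by simp
  have m0: "m > 0"
    using Min_in[of "\<alpha> ` {1..n}"] ne apos by (auto simp: m_def)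
  have "\<alpha> 1 \<le> M"
    unfolding M_def using n by (intro Max_ge) auto
  then have M0: "M > 0"
    using apos[of 1] n by simp
  have np: "real n > 0" using n by simp
  have gap_u: "amgm_gap {1..n} (\<lambda>_. 1 / real n) x = A - G"
    by (simp add: amgm_gap_def A_def G_def sum_divide_distrib[symmetric])
  have gap_\<alpha>: "amgm_gap {1..n} \<alpha> x = (\<Sum>i=1..n. \<alpha> i * x i) - (\<Prod>i=1..n. x i powr \<alpha> i)"
  proof -
    have "(\<Prod>i=1..n. x i powr \<alpha> i) = (\<Prod>i=1..n. exp (\<alpha> i * ln (x i)))"
      using xpos by (intro prod.cong) (force simp: powr_def mult.commute)+
    then show ?thesis by (simp add: amgm_gap_def exp_sum)
  qed
  have card_n: "card {1..n} = n" by simp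
  have cmp: "n * m * (A - G) \<le> amgm_gap {1..n} \<alpha> x" "amgm_gap {1..n} \<alpha> x \<le> n * M * (A - G)"
    using amgm_gap_weight_comparison[of "{1..n}" x \<alpha>, unfolded card_n gap_u] ne xpos apos asum
    unfolding m_def M_def by (simp_all add: less_imp_le)
  have "(1 - (1 + \<epsilon>) * c) * m * S = n * m * ((1 - (1 + \<epsilon>) * c) * A)"
    using np by (simp add: A_def S_def)
  also have "\<dots> < n * m * (A - G)"
    using upper m0 np by (intro mult_strict_left_mono) (simp_all add: c_def algebra_simps)
  finally have lo: "(1 - (1 + \<epsilon>) * c) * m * S < amgm_gap {1..n} \<alpha> x"
    using cmp(1) by linarith
  have "n * M * (A - G) < n * M * ((1 - (1 - \<epsilon>) * c) * A)"
    using lower M0 np by (intro mult_strict_left_mono) (simp_all add: c_def algebra_simps)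
  also have "\<dots> = (1 - (1 - \<epsilon>) * c) * M * S"
    using np by (simp add: A_def S_def)
  finally have hi: "amgm_gap {1..n} \<alpha> x < (1 - (1 - \<epsilon>) * c) * M * S"
    using cmp(2) by linarith
  have "(\<Sum>i=1..n. \<bar>x i\<bar>) = S"
    unfolding S_def using xpos by (intro sum.cong) (auto intro: abs_of_pos)
  then show ?thesis
    using lo hi unfolding amgm_window_def gap_\<alpha> c_def m_def M_def by simp
qed

lemma ratio_near_one:
  fixes B H \<delta> \<epsilon> :: real
  assumes E: "exp \<delta> * exp \<delta> \<le> 1 + \<epsilon>"
    and B: "exp (- \<delta>) < B" "B < exp \<delta>" and H: "exp (- \<delta>) < H" "H < exp \<delta>"
  shows "(1 - \<epsilon>) * B < H \<and> H < (1 + \<epsilon>) * B"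
proof -
  define E where "E = exp \<delta>"
  have E0: "E > 0" by (simp add: E_def)
  have inv: "exp (- \<delta>) = 1 / E" by (simp add: E_def exp_minus field_simps)
  have EE: "E * E \<le> 1 + \<epsilon>" using E by (simp add: E_def)
  have "(1 - \<epsilon>) * (E * E) \<le> 1"
  proof (cases "\<epsilon> \<le> 1")
    case True
    then have "(1 - \<epsilon>) * (E * E) \<le> (1 - \<epsilon>) * (1 + \<epsilon>)" using EE by (intro mult_left_mono) auto
    also have "\<dots> \<le> 1" by (simp add: algebra_simps)
    finally show ?thesis .
  next
    case False
    then show ?thesis using E0 by (smt (verit) mult_nonneg_nonneg mult_nonpos_nonneg)
  qed
  then have lower: "(1 - \<epsilon>) * E \<le> 1 / E" using E0 by (simp add: field_simps)
  have upper: "E \<le> (1 + \<epsilon>) * (1 / E)" using EE E0 by (simp add: field_simps)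
  have eps: "1 + \<epsilon> > 0" using EE E0 by (smt (verit) mult_pos_pos)
  have "(1 - \<epsilon>) * B < H"
  proof (cases "\<epsilon> \<le> 1")
    case True
    have "(1 - \<epsilon>) * B \<le> (1 - \<epsilon>) * E" using True B(2) by (intro mult_left_mono) (auto simp: E_def)
    then show ?thesis using lower H(1) inv by linarith
  next
    case False
    have "H > 0" using H(1) by (smt (verit) exp_gt_zero)
    moreover have "B > 0" using B(1) by (smt (verit) exp_gt_zero)
    ultimately show ?thesis using False by (smt (verit) mult_nonpos_nonneg)
  qed
  moreover have "H < (1 + \<epsilon>) * B"
  proof -
    have "(1 + \<epsilon>) * (1 / E) < (1 + \<epsilon>) * B" using eps B(1) inv by (intro mult_strict_left_mono) auto
    then show ?thesis using upper H(2) E_def by linarith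
  qed
  ultimately show ?thesis by blast
qed

text \<open>The mean of \<open>ln X\<close> for \<open>X\<close> exponentially distributed with rate \<open>l\<close>.\<close>
definition exponential_log_mean :: "real \<Rightarrow> real" where
  "exponential_log_mean l = - euler_mascheroni - ln l"

lemma amgm_window_of_concentration:
  fixes x \<alpha> :: "nat \<Rightarrow> real" and n :: nat and l \<delta> \<epsilon> :: real
  defines "L \<equiv> (\<Sum>i=1..n. ln (x i))" and "S \<equiv> (\<Sum>i=1..n. x i)"
  assumes l: "l > 0" and n: "n \<ge> 1" and xpos: "\<And>i. i \<in> {1..n} \<Longrightarrow> x i > 0"
    and apos: "\<And>i. i \<in> {1..n} \<Longrightarrow> \<alpha> i > 0" and asum: "(\<Sum>i=1..n. \<alpha> i) = 1"
    and E: "exp \<delta> * exp \<delta> \<le> 1 + \<epsilon>"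
    and L: "n * (exponential_log_mean l - \<delta>) < L" "L < n * (exponential_log_mean l + \<delta>)"
    and S: "n * exp (- \<delta>) < l * S" "l * S < n * exp \<delta>"
  shows "amgm_window \<epsilon> \<alpha> n x"
proof -
  define \<nu> where "\<nu> = exponential_log_mean l"
  have np: "real n > 0" using n by simp
  have "exp (- \<delta>) < l * S / n" "l * S / n < exp \<delta>"
    using S np by (simp_all add: field_simps)
  moreover have "exp (- \<delta>) < exp (L / n - \<nu>)" "exp (L / n - \<nu>) < exp \<delta>"
    using L np by (simp_all add: \<nu>_def field_simps)
  ultimately have ratio: "(1 - \<epsilon>) * (l * S / n) < exp (L / n - \<nu>)"
    "exp (L / n - \<nu>) < (1 + \<epsilon>) * (l * S / n)"
    using ratio_near_one[OF E] by blast+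
  have scale: "l * exp \<nu> = exp (- euler_mascheroni)"
    using l by (simp add: \<nu>_def exponential_log_mean_def exp_diff)
  have G: "exp (L / n) = exp (L / n - \<nu>) * exp \<nu>" by (simp add: exp_diff)
  have A: "c * (l * S / n) * exp \<nu> = c * exp (- euler_mascheroni) * (S / n)" for c
    unfolding scale[symmetric] by (simp add: algebra_simps)
  have "(1 - \<epsilon>) * exp (- euler_mascheroni) * (S / n) < exp (L / n)"
    using mult_strict_right_mono[OF ratio(1) exp_gt_zero[of \<nu>]] unfolding A G .
  moreover have "exp (L / n) < (1 + \<epsilon>) * exp (- euler_mascheroni) * (S / n)"
    using mult_strict_right_mono[OF ratio(2) exp_gt_zero[of \<nu>]] unfolding A G .
  ultimately show ?thesis
    using amgm_window_of_mean_ratio[OF n xpos apos asum] by (simp add: L_def S_def)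
qed

lemma exponential_AE_pos: "AE y in density lborel (exponential_density l). y > 0"
proof (subst AE_density)
  show "AE y in lborel. 0 < ennreal (exponential_density l y) \<longrightarrow> y > 0"
    using AE_lborel_singleton[of "0::real"]
    by eventually_elim (auto simp: exponential_density_def)
qed measurable

lemma prob_space_exp_prod_measure: "l > 0 \<Longrightarrow> prob_space (exp_prod_measure l n)"
  unfolding exp_prod_measure_def by (intro prob_space_PiM prob_space_exponential_density)

lemma exp_prod_measure_AE_pos:
  assumes "l > 0"
  shows "AE x in exp_prod_measure l n. \<forall>i\<in>{1..n}. x i > 0"
proof (rule AE_finite_allI)
  show "AE x in exp_prod_measure l n. x i > 0" if "i \<in> {1..n}" for i
    unfolding exp_prod_measure_def
    using AE_PiM_component[OF prob_space_exponential_density[OF assms] that exponential_AE_pos] .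
qed simp

lemma gamma_integral_scaled:
  fixes b s :: real
  assumes b: "b > 0" and s: "s > -1"
  shows "(\<integral>\<^sup>+x. ennreal (indicator {0..} x * x powr s * exp (- (b * x))) \<partial>lborel)
         = ennreal (Gamma (s + 1) / b powr (s + 1))"
proof -
  define f where "f t = ennreal (indicator {0..} t * t powr (s + 1 - 1) / exp t)" for t :: real
  have scaled: "f (0 + b * x) = ennreal (b powr s) * ennreal (indicator {0..} x * x powr s * exp (- (b * x)))"
    for x
    using b by (cases "x \<ge> 0")
      (simp_all add: f_def powr_mult exp_minus field_simps ennreal_mult'[symmetric] indicator_def zero_le_mult_iff)
  have "ennreal (Gamma (s + 1)) = (\<integral>\<^sup>+t. f t \<partial>lborel)"
    unfolding f_def using s by (intro Gamma_conv_nn_integral_real) simp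
  also have "\<dots> = ennreal \<bar>b\<bar> * (\<integral>\<^sup>+x. f (0 + b * x) \<partial>lborel)"
  proof (rule nn_integral_real_affine)
    show "f \<in> borel_measurable borel" unfolding f_def by measurable
  qed (use b in auto)
  also have "\<dots> = ennreal (b * b powr s) * (\<integral>\<^sup>+x. ennreal (indicator {0..} x * x powr s * exp (- (b * x))) \<partial>lborel)"
    unfolding scaled using b by (subst nn_integral_cmult) (auto simp: ennreal_mult' mult.assoc)
  finally have eq: "ennreal (Gamma (s + 1)) = ennreal (b powr (s + 1)) * (\<integral>\<^sup>+x. ennreal (indicator {0..} x * x powr s * exp (- (b * x))) \<partial>lborel)"
    using b by (simp add: powr_add mult.commute)
  have pos: "b powr (s + 1) > 0" using b by simp
  have "ennreal (1 / b powr (s + 1)) * ennreal (b powr (s + 1)) = 1"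
    using pos by (simp add: ennreal_mult'[symmetric])
  then show ?thesis
    using arg_cong[OF eq, of "(*) (ennreal (1 / b powr (s + 1)))"] pos
    by (simp add: mult.assoc[symmetric] ennreal_mult'[symmetric])
qed

lemma exponential_power_moment:
  fixes l s :: real
  assumes l: "l > 0" and s: "s > -1"
  shows "(\<integral>\<^sup>+y. ennreal (y powr s) \<partial>density lborel (exponential_density l))
         = ennreal (Gamma (s + 1) / l powr s)"
proof -
  have dens: "ennreal (exponential_density l y) * ennreal (y powr s)
      = ennreal l * ennreal (indicator {0..} y * y powr s * exp (- (l * y)))" for y
    using l by (cases "y < 0")
      (simp_all add: exponential_density_def indicator_def ennreal_mult'[symmetric] mult_ac)
  have "(\<integral>\<^sup>+y. ennreal (y powr s) \<partial>density lborel (exponential_density l))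
      = ennreal l * (\<integral>\<^sup>+y. ennreal (indicator {0..} y * y powr s * exp (- (l * y))) \<partial>lborel)"
    by (simp add: nn_integral_density dens nn_integral_cmult)
  also have "\<dots> = ennreal (l * (Gamma (s + 1) / l powr (s + 1)))"
    using l by (simp only: gamma_integral_scaled[OF l s]) (simp add: ennreal_mult'[symmetric])
  also have "l * (Gamma (s + 1) / l powr (s + 1)) = Gamma (s + 1) / l powr s"
    using l by (simp add: powr_add)
  finally show ?thesis .
qed

lemma exponential_mgf:
  fixes l a :: real
  assumes l: "l > 0" and a: "a < l"
  shows "(\<integral>\<^sup>+y. ennreal (exp (a * y)) \<partial>density lborel (exponential_density l))
         = ennreal (l / (l - a))"
proof -
  have dens: "ennreal (exponential_density l y) * ennreal (exp (a * y))
      = ennreal (l / (l - a)) * ennreal (exponential_density (l - a) y)" for y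
  proof (cases "y < 0")
    case False
    have "exp (- y * l) * exp (a * y) = exp (- y * (l - a))" by (simp add: exp_add[symmetric] algebra_simps)
    then show ?thesis using False l a by (simp add: exponential_density_def ennreal_mult'[symmetric])
  qed (simp add: exponential_density_def)
  have "emeasure (density lborel (exponential_density (l - a))) UNIV = 1"
    using prob_space.emeasure_space_1[OF prob_space_exponential_density, of "l - a"] a by simp
  then have total: "(\<integral>\<^sup>+y. ennreal (exponential_density (l - a) y) \<partial>lborel) = 1"
    by (subst (asm) emeasure_density) auto
  then show ?thesis
    by (simp add: nn_integral_density dens nn_integral_cmult)
qed

lemma product_chernoff_bound:
  fixes D :: "'a measure" and h :: "'a \<Rightarrow> real" and I :: "'i set" and t m c :: real
  assumes D: "prob_space D" and h[measurable]: "h \<in> borel_measurable D" and fin: "finite I"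
    and t: "t > 0" and m: "m \<ge> 0" and mgf: "(\<integral>\<^sup>+y. ennreal (exp (t * h y)) \<partial>D) = ennreal m"
  shows "measure (PiM I (\<lambda>_. D)) {x \<in> space (PiM I (\<lambda>_. D)). real (card I) * c \<le> (\<Sum>i\<in>I. h (x i))}
           \<le> (m / exp (t * c)) ^ card I"
proof -
  define P where "P = PiM I (\<lambda>_. D)"
  interpret P: prob_space P unfolding P_def using D by (intro prob_space_PiM)
  interpret product_sigma_finite "\<lambda>_. D"
    unfolding product_sigma_finite_def using D by (simp add: prob_space_imp_sigma_finite)
  have "emeasure P {x \<in> space P. real (card I) * c \<le> (\<Sum>i\<in>I. h (x i))}
      \<le> ennreal (exp (- t * (real (card I) * c))) * (\<integral>\<^sup>+x. ennreal (exp (t * (\<Sum>i\<in>I. h (x i)))) * indicator (space P) x \<partial>P)"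
    using t by (intro Chernoff_ineq_nn_integral_ge) (auto simp: P_def)
  also have "(\<integral>\<^sup>+x. ennreal (exp (t * (\<Sum>i\<in>I. h (x i)))) * indicator (space P) x \<partial>P)
      = (\<integral>\<^sup>+x. (\<Prod>i\<in>I. ennreal (exp (t * h (x i)))) \<partial>P)"
    by (intro nn_integral_cong)
      (simp add: sum_distrib_left exp_sum prod_ennreal fin)
  also have "\<dots> = ennreal m ^ card I"
    unfolding P_def by (subst product_nn_integral_prod) (simp_all add: fin mgf)
  also have "ennreal (exp (- t * (real (card I) * c))) * ennreal m ^ card I = ennreal ((m / exp (t * c)) ^ card I)"
    using m by (simp add: ennreal_power ennreal_mult'[symmetric] power_divide exp_of_nat_mult[symmetric]
        exp_minus field_simps)
  finally show ?thesis
    using m by (simp add: P_def P.emeasure_eq_measure[unfolded P_def])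
qed

lemma exp_prod_log_chernoff:
  fixes l r c :: real and n :: nat
  assumes l: "l > 0" and r: "r > -1"
  shows "measure (exp_prod_measure l n)
           {x \<in> space (exp_prod_measure l n). real n * c \<le> (\<Sum>i=1..n. r * ln (x i))}
         \<le> (Gamma (r + 1) / (l powr r * exp c)) ^ n"
proof -
  have "AE y in density lborel (exponential_density l). exp (1 * (r * ln y)) = y powr r"
    using exponential_AE_pos by eventually_elim (simp add: powr_def mult.commute)
  then have "(\<integral>\<^sup>+y. ennreal (exp (1 * (r * ln y))) \<partial>density lborel (exponential_density l))
      = ennreal (Gamma (r + 1) / l powr r)"
    by (subst nn_integral_cong_AE[where v = "\<lambda>y. ennreal (y powr r)"])
      (auto simp: exponential_power_moment[OF l r])
  from product_chernoff_bound[OF prob_space_exponential_density[OF l] _ _ _ _ this, where I = "{1..n}" and c = c]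
  show ?thesis
    using l r Gamma_real_pos[of "r + 1"] by (simp add: exp_prod_measure_def)
qed

lemma exp_prod_linear_chernoff:
  fixes l r c :: real and n :: nat
  assumes l: "l > 0" and r: "r < 1"
  shows "measure (exp_prod_measure l n)
           {x \<in> space (exp_prod_measure l n). real n * c \<le> (\<Sum>i=1..n. r * l * x i)}
         \<le> (1 / ((1 - r) * exp c)) ^ n"
proof -
  have "(\<integral>\<^sup>+y. ennreal (exp (1 * (r * l * y))) \<partial>density lborel (exponential_density l))
      = ennreal (1 / (1 - r))"
    using exponential_mgf[OF l, of "r * l"] l r by (simp add: mult_less_cancel_right1 field_simps)
  from product_chernoff_bound[OF prob_space_exponential_density[OF l] _ _ _ _ this, where I = "{1..n}" and c = c]
  show ?thesis
    using l r by (simp add: exp_prod_measure_def)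
qed

text \<open>A function with value 1 and negative slope at 0 drops below 1 at some point of \<open>(0,1)\<close>;
  this is how each Chernoff parameter is chosen.\<close>
lemma exists_below_one_near_zero:
  fixes f :: "real \<Rightarrow> real"
  assumes "DERIV f 0 :> d" "d < 0" "f 0 = 1"
  obtains s where "0 < s" "s < 1" "f s < 1"
proof -
  obtain e where e: "e > 0" "\<And>h. h > 0 \<Longrightarrow> h < e \<Longrightarrow> f (0 + h) < f 0"
    using DERIV_neg_dec_right[OF assms(1,2)] by blast
  show ?thesis
    using e assms(3) by (intro that[of "min (e / 2) (1 / 2)"]) auto
qed

text \<open>The derivative at 0 of the
  Chernoff ratio is \<open>-\<delta>\<close> resp. \<open>1 - e\<^sup>\<plusminus>\<^sup>\<delta>\<close>, since \<open>\<Gamma>'(1) = -\<gamma>\<close>.\<close>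
lemma log_sum_upper_tail:
  assumes \<delta>: "\<delta> > 0"
  obtains q :: real where "0 < q" "q < 1"
    "\<And>l n. l > 0 \<Longrightarrow> measure (exp_prod_measure l n)
       {x \<in> space (exp_prod_measure l n). real n * (exponential_log_mean l + \<delta>) \<le> (\<Sum>i=1..n. ln (x i))} \<le> q ^ n"
proof -
  have "DERIV (\<lambda>s. Gamma (s + 1) * exp (s * (euler_mascheroni - \<delta>))) 0 :> - \<delta>"
    by (rule derivative_eq_intros refl | simp)+
  then obtain s where s: "0 < s" "s < 1" "Gamma (s + 1) * exp (s * (euler_mascheroni - \<delta>)) < 1"
    by (rule exists_below_one_near_zero) (use \<delta> in simp_all)
  show thesis
  proof (rule that)
    show "0 < Gamma (s + 1) * exp (s * (euler_mascheroni - \<delta>))"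
      using s by (simp add: Gamma_real_pos)
    fix l :: real and n assume l: "l > 0"
    have "Gamma (s + 1) / (l powr s * exp (s * (exponential_log_mean l + \<delta>)))
        = Gamma (s + 1) * exp (s * (euler_mascheroni - \<delta>))"
    proof -
      have "l powr s * exp (s * (exponential_log_mean l + \<delta>)) = exp (- (s * (euler_mascheroni - \<delta>)))"
        using l by (simp add: exponential_log_mean_def powr_def algebra_simps flip: exp_add)
      then show ?thesis by (simp add: exp_minus divide_inverse)
    qed
    moreover have "{x \<in> space (exp_prod_measure l n). real n * (s * (exponential_log_mean l + \<delta>)) \<le> (\<Sum>i=1..n. s * ln (x i))}
        = {x \<in> space (exp_prod_measure l n). real n * (exponential_log_mean l + \<delta>) \<le> (\<Sum>i=1..n. ln (x i))}"
      using s by (simp add: sum_distrib_left[symmetric] mult.left_commute[of "real n"])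
    ultimately show "measure (exp_prod_measure l n)
       {x \<in> space (exp_prod_measure l n). real n * (exponential_log_mean l + \<delta>) \<le> (\<Sum>i=1..n. ln (x i))}
       \<le> (Gamma (s + 1) * exp (s * (euler_mascheroni - \<delta>))) ^ n"
      using exp_prod_log_chernoff[OF l, of s n "s * (exponential_log_mean l + \<delta>)"] s by simp
  qed (use s in auto)
qed

lemma log_sum_lower_tail:
  assumes \<delta>: "\<delta> > 0"
  obtains q :: real where "0 < q" "q < 1"
    "\<And>l n. l > 0 \<Longrightarrow> measure (exp_prod_measure l n)
       {x \<in> space (exp_prod_measure l n). (\<Sum>i=1..n. ln (x i)) \<le> real n * (exponential_log_mean l - \<delta>)} \<le> q ^ n"
proof -
  have "DERIV (\<lambda>s. Gamma (- s + 1) * exp (- s * (euler_mascheroni + \<delta>))) 0 :> - \<delta>"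
    by (rule derivative_eq_intros refl | simp)+
  then obtain s where s: "0 < s" "s < 1" "Gamma (- s + 1) * exp (- s * (euler_mascheroni + \<delta>)) < 1"
    by (rule exists_below_one_near_zero) (use \<delta> in simp_all)
  show thesis
  proof (rule that)
    show "0 < Gamma (- s + 1) * exp (- s * (euler_mascheroni + \<delta>))"
      using s by (simp add: Gamma_real_pos)
    fix l :: real and n assume l: "l > 0"
    have "Gamma (- s + 1) / (l powr (- s) * exp (- s * (exponential_log_mean l - \<delta>)))
        = Gamma (- s + 1) * exp (- s * (euler_mascheroni + \<delta>))"
    proof -
      have "l powr (- s) * exp (- s * (exponential_log_mean l - \<delta>)) = exp (- (- s * (euler_mascheroni + \<delta>)))"
        using l by (simp add: exponential_log_mean_def powr_def algebra_simps flip: exp_add)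
      then show ?thesis by (simp add: exp_minus divide_inverse)
    qed
    moreover have "{x \<in> space (exp_prod_measure l n). real n * (- s * (exponential_log_mean l - \<delta>)) \<le> (\<Sum>i=1..n. - s * ln (x i))}
        = {x \<in> space (exp_prod_measure l n). (\<Sum>i=1..n. ln (x i)) \<le> real n * (exponential_log_mean l - \<delta>)}"
      using s by (simp add: sum_negf sum_distrib_left[symmetric] mult.left_commute[of "real n"])
    ultimately show "measure (exp_prod_measure l n)
       {x \<in> space (exp_prod_measure l n). (\<Sum>i=1..n. ln (x i)) \<le> real n * (exponential_log_mean l - \<delta>)}
       \<le> (Gamma (- s + 1) * exp (- s * (euler_mascheroni + \<delta>))) ^ n"
      using exp_prod_log_chernoff[OF l, of "- s" n "- s * (exponential_log_mean l - \<delta>)"] s by simp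
  qed (use s in auto)
qed

lemma sum_upper_tail:
  assumes \<delta>: "\<delta> > 0"
  obtains q :: real where "0 < q" "q < 1"
    "\<And>l n. l > 0 \<Longrightarrow> measure (exp_prod_measure l n)
       {x \<in> space (exp_prod_measure l n). real n * exp \<delta> \<le> l * (\<Sum>i=1..n. x i)} \<le> q ^ n"
proof -
  have "DERIV (\<lambda>t. 1 / ((1 - t) * exp (t * exp \<delta>))) 0 :> 1 - exp \<delta>"
    by (rule derivative_eq_intros refl | simp)+
  then obtain t where t: "0 < t" "t < 1" "1 / ((1 - t) * exp (t * exp \<delta>)) < 1"
    by (rule exists_below_one_near_zero) (use \<delta> in simp_all)
  show thesis
  proof (rule that)
    show "0 < 1 / ((1 - t) * exp (t * exp \<delta>))"
      using t by simp
    fix l :: real and n assume l: "l > 0"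
    have "{x \<in> space (exp_prod_measure l n). real n * (t * exp \<delta>) \<le> (\<Sum>i=1..n. t * l * x i)}
        = {x \<in> space (exp_prod_measure l n). real n * exp \<delta> \<le> l * (\<Sum>i=1..n. x i)}"
      using t by (simp add: sum_distrib_left[symmetric] mult.assoc mult.left_commute[of "real n"])
    then show "measure (exp_prod_measure l n)
       {x \<in> space (exp_prod_measure l n). real n * exp \<delta> \<le> l * (\<Sum>i=1..n. x i)}
       \<le> (1 / ((1 - t) * exp (t * exp \<delta>))) ^ n"
      using exp_prod_linear_chernoff[OF l, of t n "t * exp \<delta>"] t by simp
  qed (use t in auto)
qed

lemma sum_lower_tail:
  assumes \<delta>: "\<delta> > 0"
  obtains q :: real where "0 < q" "q < 1"
    "\<And>l n. l > 0 \<Longrightarrow> measure (exp_prod_measure l n)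
       {x \<in> space (exp_prod_measure l n). l * (\<Sum>i=1..n. x i) \<le> real n * exp (- \<delta>)} \<le> q ^ n"
proof -
  have "DERIV (\<lambda>t. 1 / ((1 + t) * exp (- t * exp (- \<delta>)))) 0 :> exp (- \<delta>) - 1"
    by (rule derivative_eq_intros refl | simp)+
  then obtain t where t: "0 < t" "t < 1" "1 / ((1 + t) * exp (- t * exp (- \<delta>))) < 1"
    by (rule exists_below_one_near_zero) (use \<delta> in simp_all)
  show thesis
  proof (rule that)
    show "0 < 1 / ((1 + t) * exp (- t * exp (- \<delta>)))"
      using t by simp
    fix l :: real and n assume l: "l > 0"
    have "{x \<in> space (exp_prod_measure l n). real n * (- t * exp (- \<delta>)) \<le> (\<Sum>i=1..n. - t * l * x i)}
        = {x \<in> space (exp_prod_measure l n). l * (\<Sum>i=1..n. x i) \<le> real n * exp (- \<delta>)}"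
      using t by (simp add: sum_negf sum_distrib_left[symmetric] mult.assoc mult.left_commute[of "real n"])
    then show "measure (exp_prod_measure l n)
       {x \<in> space (exp_prod_measure l n). l * (\<Sum>i=1..n. x i) \<le> real n * exp (- \<delta>)}
       \<le> (1 / ((1 + t) * exp (- t * exp (- \<delta>)))) ^ n"
      using exp_prod_linear_chernoff[OF l, of "- t" n "- t * exp (- \<delta>)"] t by simp
  qed (use t in auto)
qed

lemma (in prob_space) prob_lower_bound_outside_bad_event:
  assumes W: "W \<in> events" and B: "B \<in> events" and cover: "AE x in M. x \<notin> B \<longrightarrow> x \<in> W"
  shows "1 - prob B \<le> prob W"
proof -
  have "prob (space M - B) \<le> prob W"
    using cover W B by (intro finite_measure_mono_AE) auto
  then show ?thesis using prob_compl[OF B] by simp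
qed

lemma amgm_window_prob_lower_bound:
  fixes l \<delta> \<epsilon> :: real and \<alpha> :: "nat \<Rightarrow> real" and n :: nat
  defines "P \<equiv> exp_prod_measure l n"
  assumes l: "l > 0" and n: "n \<ge> 1" and apos: "\<forall>i\<in>{1..n}. \<alpha> i > 0" and asum: "(\<Sum>i=1..n. \<alpha> i) = 1"
    and E: "exp \<delta> * exp \<delta> \<le> 1 + \<epsilon>"
  shows "1 - (measure P {x \<in> space P. real n * (exponential_log_mean l + \<delta>) \<le> (\<Sum>i=1..n. ln (x i))}
             + measure P {x \<in> space P. (\<Sum>i=1..n. ln (x i)) \<le> real n * (exponential_log_mean l - \<delta>)}
             + measure P {x \<in> space P. real n * exp \<delta> \<le> l * (\<Sum>i=1..n. x i)}
             + measure P {x \<in> space P. l * (\<Sum>i=1..n. x i) \<le> real n * exp (- \<delta>)})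
         \<le> measure P {x \<in> space P. amgm_window \<epsilon> \<alpha> n x}"
proof -
  interpret P: prob_space P unfolding P_def using l by (rule prob_space_exp_prod_measure)
  have [measurable_cong]: "sets P = sets (PiM {1..n} (\<lambda>_. borel :: real measure))"
    unfolding P_def exp_prod_measure_def by (intro sets_PiM_cong) auto
  define B1 where "B1 = {x \<in> space P. real n * (exponential_log_mean l + \<delta>) \<le> (\<Sum>i=1..n. ln (x i))}"
  define B2 where "B2 = {x \<in> space P. (\<Sum>i=1..n. ln (x i)) \<le> real n * (exponential_log_mean l - \<delta>)}"
  define B3 where "B3 = {x \<in> space P. real n * exp \<delta> \<le> l * (\<Sum>i=1..n. x i)}"
  define B4 where "B4 = {x \<in> space P. l * (\<Sum>i=1..n. x i) \<le> real n * exp (- \<delta>)}"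
  define W where "W = {x \<in> space P. amgm_window \<epsilon> \<alpha> n x}"
  have events: "B1 \<in> P.events" "B2 \<in> P.events" "B3 \<in> P.events" "B4 \<in> P.events" "W \<in> P.events"
    unfolding B1_def B2_def B3_def B4_def W_def amgm_window_def by measurable
  have "AE x in P. x \<notin> B1 \<union> B2 \<union> B3 \<union> B4 \<longrightarrow> x \<in> W"
    using AE_space exp_prod_measure_AE_pos[OF l, of n, folded P_def]
  proof eventually_elim
    case (elim x)
    show ?case
    proof
      assume "x \<notin> B1 \<union> B2 \<union> B3 \<union> B4"
      then have "real n * (exponential_log_mean l - \<delta>) < (\<Sum>i=1..n. ln (x i))"
        "(\<Sum>i=1..n. ln (x i)) < real n * (exponential_log_mean l + \<delta>)"
        "real n * exp (- \<delta>) < l * (\<Sum>i=1..n. x i)" "l * (\<Sum>i=1..n. x i) < real n * exp \<delta>"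
        using elim(1) by (auto simp: B1_def B2_def B3_def B4_def)
      then have "amgm_window \<epsilon> \<alpha> n x"
        using amgm_window_of_concentration[OF l n _ _ asum E] elim(2) apos by blast
      then show "x \<in> W" using elim(1) by (simp add: W_def)
    qed
  qed
  then have "1 - P.prob (B1 \<union> B2 \<union> B3 \<union> B4) \<le> P.prob W"
    using events by (intro P.prob_lower_bound_outside_bad_event) auto
  moreover have "B1 \<union> B2 \<in> P.events" "B1 \<union> B2 \<union> B3 \<in> P.events" using events by auto
  ultimately show ?thesis
    using measure_Un_le[of "B1 \<union> B2 \<union> B3" P B4] measure_Un_le[of "B1 \<union> B2" P B3]
      measure_Un_le[of B1 P B2] events unfolding B1_def B2_def B3_def B4_def W_def by linarith
qed

lemma amgm_window_deviation:
  fixes \<epsilon> :: real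
  assumes \<epsilon>: "\<epsilon> > 0"
  obtains q :: real where "0 < q" "q < 1"
    "\<And>l \<alpha> n. l > 0 \<Longrightarrow> n \<ge> 1 \<Longrightarrow> (\<forall>i\<in>{1..n}. \<alpha> i > 0) \<Longrightarrow> (\<Sum>i=1..n. \<alpha> i) = 1 \<Longrightarrow>
       1 - 4 * q ^ n \<le> measure (exp_prod_measure l n)
         {x \<in> space (exp_prod_measure l n). amgm_window \<epsilon> \<alpha> n x}"
proof -
  define \<delta> where "\<delta> = ln (1 + \<epsilon>) / 2"
  have \<delta>: "\<delta> > 0" using \<epsilon> by (simp add: \<delta>_def)
  have E: "exp \<delta> * exp \<delta> \<le> 1 + \<epsilon>"
    using \<epsilon> by (simp add: \<delta>_def flip: exp_add)
  obtain q1 q2 q3 q4 :: real where q: "0 < q1" "q1 < 1" "0 < q2" "q2 < 1" "0 < q3" "q3 < 1" "0 < q4" "q4 < 1"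
    and tail1: "\<And>l n. l > 0 \<Longrightarrow> measure (exp_prod_measure l n)
       {x \<in> space (exp_prod_measure l n). real n * (exponential_log_mean l + \<delta>) \<le> (\<Sum>i=1..n. ln (x i))} \<le> q1 ^ n"
    and tail2: "\<And>l n. l > 0 \<Longrightarrow> measure (exp_prod_measure l n)
       {x \<in> space (exp_prod_measure l n). (\<Sum>i=1..n. ln (x i)) \<le> real n * (exponential_log_mean l - \<delta>)} \<le> q2 ^ n"
    and tail3: "\<And>l n. l > 0 \<Longrightarrow> measure (exp_prod_measure l n)
       {x \<in> space (exp_prod_measure l n). real n * exp \<delta> \<le> l * (\<Sum>i=1..n. x i)} \<le> q3 ^ n"
    and tail4: "\<And>l n. l > 0 \<Longrightarrow> measure (exp_prod_measure l n)
       {x \<in> space (exp_prod_measure l n). l * (\<Sum>i=1..n. x i) \<le> real n * exp (- \<delta>)} \<le> q4 ^ n"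
    by (rule log_sum_upper_tail[OF \<delta>], rule log_sum_lower_tail[OF \<delta>],
        rule sum_upper_tail[OF \<delta>], rule sum_lower_tail[OF \<delta>]) blast
  define q where "q = max (max q1 q2) (max q3 q4)"
  have pow: "q1 ^ n \<le> q ^ n" "q2 ^ n \<le> q ^ n" "q3 ^ n \<le> q ^ n" "q4 ^ n \<le> q ^ n" for n
    using q by (auto simp: q_def intro!: power_mono)
  show thesis
  proof (rule that)
    show "0 < q" "q < 1" using q by (auto simp: q_def)
    fix l :: real and \<alpha> :: "nat \<Rightarrow> real" and n :: nat
    assume l: "l > 0" and window_hyps: "n \<ge> 1" "\<forall>i\<in>{1..n}. \<alpha> i > 0" "(\<Sum>i=1..n. \<alpha> i) = 1"
    show "1 - 4 * q ^ n \<le> measure (exp_prod_measure l n)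
         {x \<in> space (exp_prod_measure l n). amgm_window \<epsilon> \<alpha> n x}"
      using amgm_window_prob_lower_bound[OF l window_hyps E]
        tail1[OF l, of n] tail2[OF l, of n] tail3[OF l, of n] tail4[OF l, of n] pow[of n]
      by linarith
  qed
qed

lemma powr_times_power_tendsto_zero:
  fixes q k :: real
  assumes "0 < q" "q < 1"
  shows "(\<lambda>n::nat. real n powr k * q ^ n) \<longlonglongrightarrow> 0"
proof -
  have "(\<lambda>n::nat. real n powr k * exp (real n * ln q)) \<longlonglongrightarrow> 0"
    using assms by real_asymp
  moreover have "exp (real n * ln q) = q ^ n" for n :: nat
    using exp_of_nat_mult[of n "ln q"] assms by simp
  ultimately show ?thesis by simp
qed

theorem theorem4p3:
  fixes k \<epsilon> :: real
  assumes "k > 0" and "\<epsilon> > 0"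
  shows "\<exists>N::nat. \<forall>l::real. \<forall>\<alpha>::nat \<Rightarrow> real. \<forall>n::nat.
     l > 0 \<longrightarrow> n \<ge> 2 \<longrightarrow> n \<ge> N \<longrightarrow>
     (\<forall>i\<in>{1..n}. \<alpha> i > 0) \<longrightarrow> (\<Sum>i=1..n. \<alpha> i) = 1 \<longrightarrow>
     measure (exp_prod_measure l n)
       {x \<in> space (exp_prod_measure l n).
          (1 - (1 + \<epsilon>) * exp (- euler_mascheroni)) * Min (\<alpha> ` {1..n}) * (\<Sum>i=1..n. \<bar>x i\<bar>)
            < (\<Sum>i=1..n. \<alpha> i * x i) - (\<Prod>i=1..n. x i powr \<alpha> i)
        \<and> (\<Sum>i=1..n. \<alpha> i * x i) - (\<Prod>i=1..n. x i powr \<alpha> i)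
            < (1 - (1 - \<epsilon>) * exp (- euler_mascheroni)) * Max (\<alpha> ` {1..n}) * (\<Sum>i=1..n. \<bar>x i\<bar>)}
     \<ge> 1 - 1 / (real n powr k)"
proof -
  obtain q :: real where q: "0 < q" "q < 1"
    and deviation: "\<And>l \<alpha> n. l > 0 \<Longrightarrow> n \<ge> 1 \<Longrightarrow> (\<forall>i\<in>{1..n}. \<alpha> i > 0) \<Longrightarrow> (\<Sum>i=1..n. \<alpha> i) = 1 \<Longrightarrow>
       1 - 4 * q ^ n \<le> measure (exp_prod_measure l n) {x \<in> space (exp_prod_measure l n). amgm_window \<epsilon> \<alpha> n x}"
    using amgm_window_deviation[OF \<open>\<epsilon> > 0\<close>] by blast
  have "eventually (\<lambda>n. real n powr k * q ^ n < 1 / 4) sequentially"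
    using order_tendstoD(2)[OF powr_times_power_tendsto_zero[OF q], of "1 / 4"] by simp
  then obtain N where N: "\<And>n. n \<ge> N \<Longrightarrow> real n powr k * q ^ n < 1 / 4"
    unfolding eventually_sequentially by blast
  show ?thesis
    unfolding amgm_window_def[symmetric]
  proof (intro exI[of _ N] allI impI)
    fix l :: real and \<alpha> :: "nat \<Rightarrow> real" and n :: nat
    assume l: "l > 0" and n: "n \<ge> 2" "n \<ge> N" and \<alpha>: "\<forall>i\<in>{1..n}. \<alpha> i > 0" "(\<Sum>i=1..n. \<alpha> i) = 1"
    have "4 * q ^ n \<le> 1 / real n powr k"
      using N[OF n(2)] n(1) by (simp add: field_simps)
    then show "1 - 1 / real n powr k
        \<le> measure (exp_prod_measure l n) {x \<in> space (exp_prod_measure l n). amgm_window \<epsilon> \<alpha> n x}"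
      using deviation[OF l _ \<alpha>] n(1) by fastforce
  qed
qed

end
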